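(* Let $\Lambda=\{\lambda_1,\dots,\lambda_m\}$ be a finite set of distinct points of the open unit disk $\mathbb{D}\subset\mathbb{C}$, and let $k_j=k(\lambda_j)\ge1$ be integers such that for every non-real $\lambda\in\Lambda$ we have $\overline{\lambda}\in\Lambda$ and $k(\overline{\lambda})=k(\lambda)$. If $\prod_{j=1}^m|\lambda_j|^{k_j}\ge1/2$, then there exists $f\in\mathcal{B}$ having a zero at $\lambda_j$ of multiplicity at least $k(\lambda_j)$ for every $j=1,\dots,m$.
   Context: $\mathcal{B}=\{1+\sum_{n=1}^\infty a_n x^n : a_n\in\{-1,0,1\}\}$, power series converging on $\mathbb{D}$. *)

theory Defs
  imports "HOL-Analysis.Analysis"
begin

text \<open>The class B: power series 1 + sum a_n x^n with a_n in {-1,0,1},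
  represented by their coefficient sequence.\<close>
definition coeffs_B :: "(nat \<Rightarrow> int) set" where
  "coeffs_B = {a. a 0 = 1 \<and> (\<forall>n\<ge>1. a n \<in> {-1, 0, 1})}"

definition ps_fun :: "(nat \<Rightarrow> int) \<Rightarrow> complex \<Rightarrow> complex" where
  "ps_fun a z = (\<Sum>n. of_int (a n) * z ^ n)"

definition zero_mult_ge :: "(complex \<Rightarrow> complex) \<Rightarrow> complex \<Rightarrow> nat \<Rightarrow> bool" where
  "zero_mult_ge f z k \<longleftrightarrow> (\<forall>i<k. (deriv ^^ i) f z = 0)"

end

theory Submission
  imports Defs "HOL-Real_Asymp.Real_Asymp" "HOL-Computational_Algebra.Polynomial"
begin

text \<open>
  For \<open>z \<noteq> 0\<close>, \<open>ps_fun a\<close> has a zero of order at least \<open>k\<close> at \<open>z\<close> as soon as the Euler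
  series \<open>\<Sum>n. a n * n\<^sup>i * z\<^sup>n\<close> vanish for \<open>i < k\<close>.

  Suppose first that \<open>(\<Prod>\<lambda>\<in>\<Lambda>. |\<lambda>| ^ k \<lambda>) > 1/2\<close>. The \<open>2\<^sup>M\<close> polynomials of degree \<open>< M\<close> with
  coefficients in \<open>{0, 1}\<close> have Euler sums at the points of \<open>\<Lambda>\<close> bounded polynomially in \<open>M\<close>.
  By conjugation symmetry one real coordinate per pair \<open>(\<lambda>, i)\<close> controls them, so cutting
  these coordinates into intervals of length about \<open>|\<lambda>|\<^sup>M\<close> produces fewer than \<open>2\<^sup>M\<close> boxes
  for large \<open>M\<close>. Two polynomials in the same box differ by a polynomial with coefficients in
  \<open>{-1, 0, 1}\<close> whose Euler sums are of size \<open>|\<lambda>|\<^sup>M\<close>; dividing it by its lowest power of \<open>z\<close>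
  and fixing the sign gives an element of the class B with arbitrarily small Euler sums at \<open>\<Lambda>\<close>.

  If the product equals \<open>1/2\<close>, apply this to \<open>t \<Lambda>\<close> with \<open>t > 1\<close> tending to \<open>1\<close> and the tolerance
  tending to \<open>0\<close>; a coefficientwise limit point of the resulting sequence in \<open>{-1, 0, 1}\<^sup>\<nat>\<close>
  has vanishing Euler series at \<open>\<Lambda>\<close> by continuity.
\<close>

section \<open>Euler series and higher derivatives\<close>

lemma coeffs_B_iff: "a \<in> coeffs_B \<longleftrightarrow> a 0 = 1 \<and> (\<forall>n. a n \<in> {-1, 0, 1})"
proof
  assume "a \<in> coeffs_B"
  then have "a 0 = 1" "\<forall>n\<ge>1. a n \<in> {-1, 0, 1}"
    by (simp_all add: coeffs_B_def)
  moreover have "a n \<in> {-1, 0, 1}" for n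
    using calculation by (cases "n = 0") auto
  ultimately show "a 0 = 1 \<and> (\<forall>n. a n \<in> {-1, 0, 1})"
    by blast
qed (simp add: coeffs_B_def)

lemma coeffs_B_abs_le_1:
  assumes "a \<in> coeffs_B"
  shows "\<bar>a n\<bar> \<le> 1"
proof -
  have "a n \<in> {-1, 0, 1}"
    using assms by (simp add: coeffs_B_iff)
  then show ?thesis
    by auto
qed

text \<open>The \<open>i\<close>-th power of the Euler operator \<open>z d/dz\<close> applied to \<open>ps_fun a\<close>, evaluated at \<open>z\<close>.\<close>
definition euler_series :: "(nat \<Rightarrow> int) \<Rightarrow> complex \<Rightarrow> nat \<Rightarrow> complex" where
  "euler_series a z i = (\<Sum>n. of_int (a n) * of_nat n ^ i * z ^ n)"

definition euler_partial :: "nat \<Rightarrow> (nat \<Rightarrow> int) \<Rightarrow> complex \<Rightarrow> nat \<Rightarrow> complex" where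
  "euler_partial M a z i = (\<Sum>n<M. of_int (a n) * of_nat n ^ i * z ^ n)"

lemma summable_real_power_mult_geometric:
  fixes r :: real
  assumes "0 \<le> r" "r < 1"
  shows "summable (\<lambda>n. real n ^ j * r ^ n)"
proof -
  have "conv_radius (\<lambda>n. real n ^ j) = ereal 1"
    by (rule conv_radius_ratio_limit_nonzero[of _ 1]) (simp_all, real_asymp)
  then show ?thesis
    using assms by (intro summable_in_conv_radius) simp
qed

lemma norm_euler_term_le:
  assumes "\<bar>a n\<bar> \<le> 1" "norm z \<le> r"
  shows "norm (of_int (a n) * of_nat n ^ i * z ^ n :: complex) \<le> real n ^ i * r ^ n"
proof -
  have "\<bar>real_of_int (a n)\<bar> \<le> 1"
    using assms(1) by (metis of_int_abs of_int_le_1_iff)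
  then have "\<bar>real_of_int (a n)\<bar> * (real n ^ i * norm z ^ n) \<le> 1 * (real n ^ i * r ^ n)"
    using assms(2) by (intro mult_mono mult_left_mono power_mono) auto
  then show ?thesis
    by (simp add: norm_mult norm_power)
qed

lemma summable_norm_euler_series:
  assumes "\<forall>n. \<bar>a n\<bar> \<le> 1" "norm z \<le> r" "r < 1"
  shows "summable (\<lambda>n. norm (of_int (a n) * of_nat n ^ i * z ^ n :: complex))"
proof (rule summable_comparison_test')
  show "summable (\<lambda>n. real n ^ i * r ^ n)"
    using assms by (intro summable_real_power_mult_geometric) (auto intro: order_trans[OF norm_ge_zero])
  show "norm (norm (of_int (a n) * of_nat n ^ i * z ^ n :: complex)) \<le> real n ^ i * r ^ n" for n
    using norm_euler_term_le assms by simp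
qed

lemma summable_euler_series:
  assumes "\<forall>n. \<bar>a n\<bar> \<le> 1" "norm z < 1"
  shows "summable (\<lambda>n. of_int (a n) * of_nat n ^ i * z ^ n :: complex)"
  using summable_norm_euler_series[OF assms(1) order_refl assms(2)] by (rule summable_norm_cancel)

lemma higher_deriv_eval_fps:
  fixes F :: "complex fps"
  assumes "ereal (norm z) < fps_conv_radius F"
  shows "(deriv ^^ i) (eval_fps F) z = eval_fps (fps_nth_deriv i F) z"
  using assms
proof (induction i arbitrary: F)
  case 0
  then show ?case by simp
next
  case (Suc i F)
  have "(deriv ^^ Suc i) (eval_fps F) z = (deriv ^^ i) (deriv (eval_fps F)) z"
    unfolding funpow_Suc_right o_def ..
  also have "eventually (\<lambda>w. w \<in> eball 0 (fps_conv_radius F)) (nhds z)"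
    using Suc.prems by (intro eventually_nhds_in_open) auto
  then have "eventually (\<lambda>w. deriv (eval_fps F) w = eval_fps (fps_deriv F) w) (nhds z)"
    by eventually_elim (simp add: eval_fps_deriv)
  then have "(deriv ^^ i) (deriv (eval_fps F)) z = (deriv ^^ i) (eval_fps (fps_deriv F)) z"
    by (intro higher_deriv_cong_ev refl)
  also have "\<dots> = eval_fps (fps_nth_deriv i (fps_deriv F)) z"
    using Suc.prems fps_conv_radius_deriv[of F] by (intro Suc.IH) (auto intro: order.strict_trans2)
  finally show ?case
    by simp
qed

lemma fps_conv_radius_nth_deriv_ge:
  fixes F :: "complex fps"
  shows "fps_conv_radius F \<le> fps_conv_radius (fps_nth_deriv i F)"
proof (induction i arbitrary: F)
  case (Suc i F)
  then show ?case
    using fps_conv_radius_deriv[of F] Suc.IH[of "fps_deriv F"] by (metis order_trans fps_nth_deriv.simps(2))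
qed simp

lemma fps_nth_X_power_mult_nth_deriv:
  fixes F :: "complex fps"
  shows "fps_nth (fps_X ^ i * fps_nth_deriv i F) m = fps_nth F m * (\<Prod>t<i. of_nat m - of_nat t)"
proof (induction i arbitrary: F m)
  case 0
  then show ?case by simp
next
  case (Suc i F m)
  have "fps_X ^ Suc i * fps_nth_deriv (Suc i) F = fps_X * (fps_X ^ i * fps_nth_deriv i (fps_deriv F))"
    by (simp only: power_Suc fps_nth_deriv.simps mult.assoc)
  then have "fps_nth (fps_X ^ Suc i * fps_nth_deriv (Suc i) F) m =
      (if m = 0 then 0 else fps_nth (fps_deriv F) (m - 1) * (\<Prod>t<i. of_nat (m - 1) - of_nat t))"
    using Suc.IH by (simp only: fps_X_mult_nth)
  also have "\<dots> = fps_nth F m * (\<Prod>t<Suc i. of_nat m - of_nat t)"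
  proof (cases m)
    case 0
    then show ?thesis by (auto simp add: prod.lessThan_Suc_shift)
  next
    case (Suc m')
    have "(\<Prod>t<Suc i. of_nat (Suc m') - of_nat t :: complex) = of_nat (Suc m') * (\<Prod>t<i. of_nat m' - of_nat t)"
      by (subst prod.lessThan_Suc_shift) simp
    then show ?thesis
      using Suc by (simp add: mult_ac del: of_nat_Suc)
  qed
  finally show ?case .
qed

lemma fps_conv_radius_ge_1:
  assumes "\<forall>n. \<bar>a n\<bar> \<le> 1"
  shows "1 \<le> fps_conv_radius (Abs_fps (\<lambda>n. of_int (a n) :: complex))"
  unfolding fps_conv_radius_def
proof (rule conv_radius_geI_ex')
  fix r :: real
  assume "0 < r" "ereal r < 1"
  then show "summable (\<lambda>n. fps_nth (Abs_fps (\<lambda>n. of_int (a n) :: complex)) n * of_real r ^ n)"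
    using summable_euler_series[OF assms, of "of_real r" 0] by simp
qed

lemma higher_deriv_ps_fun_eq_0:
  assumes a: "\<forall>n. \<bar>a n\<bar> \<le> 1" and z: "norm z < 1" "z \<noteq> 0"
    and vanish: "\<forall>j\<le>i. euler_series a z j = 0"
  shows "(deriv ^^ i) (ps_fun a) z = 0"
proof -
  define F where "F = Abs_fps (\<lambda>n. of_int (a n) :: complex)"
  have ps_fun_eq: "ps_fun a = eval_fps F"
    by (simp add: fun_eq_iff ps_fun_def eval_fps_def F_def)
  have "ereal (norm z) < 1"
    using z by simp
  then have rad: "ereal (norm z) < fps_conv_radius F"
    unfolding F_def using fps_conv_radius_ge_1[OF a] by (rule order.strict_trans2)
  \<comment> \<open>The falling factorial \<open>n (n - 1) \<cdots> (n - i + 1)\<close> as a polynomial in \<open>n\<close>: the Taylor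
      coefficients of \<open>z\<^sup>i * (deriv ^^ i) (ps_fun a) z\<close> are \<open>a n * poly P n\<close>.\<close>
  define P where "P = (\<Prod>t<i. [:- of_nat t, 1::complex:])"
  have "z ^ i * (deriv ^^ i) (ps_fun a) z = eval_fps (fps_X ^ i) z * eval_fps (fps_nth_deriv i F) z"
    using higher_deriv_eval_fps[OF rad] ps_fun_eq by simp
  also have "\<dots> = eval_fps (fps_X ^ i * fps_nth_deriv i F) z"
    using rad fps_conv_radius_nth_deriv_ge[of F i] by (intro eval_fps_mult [symmetric]) (auto intro: order.strict_trans2)
  also have "\<dots> = (\<Sum>m. of_int (a m) * poly P (of_nat m) * z ^ m)"
    unfolding eval_fps_def fps_nth_X_power_mult_nth_deriv P_def by (simp add: F_def poly_prod)
  also have "\<dots> = (\<Sum>m. \<Sum>j\<le>degree P. coeff P j * (of_int (a m) * of_nat m ^ j * z ^ m))"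
    by (simp add: poly_altdef sum_distrib_left sum_distrib_right mult_ac)
  also have "\<dots> = (\<Sum>j\<le>degree P. \<Sum>m. coeff P j * (of_int (a m) * of_nat m ^ j * z ^ m))"
    by (intro suminf_sum summable_mult summable_euler_series[OF a z(1)])
  also have "\<dots> = (\<Sum>j\<le>degree P. coeff P j * euler_series a z j)"
    unfolding euler_series_def by (intro sum.cong refl suminf_mult summable_euler_series[OF a z(1)])
  also have "\<dots> = 0"
  proof -
    have "degree P \<le> (\<Sum>t<i. degree [:- of_nat t, 1::complex:])"
      unfolding P_def using degree_prod_sum_le[of "{..<i}" "\<lambda>t. [:- of_nat t, 1::complex:]"]
      by (simp add: o_def)
    then have "degree P \<le> i"
      by simp
    then show ?thesis
      using vanish by (intro sum.neutral) auto
  qed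
  finally show ?thesis
    using z by simp
qed

lemma zero_mult_ge_if_euler_series_eq_0:
  assumes "\<forall>n. \<bar>a n\<bar> \<le> 1" "norm z < 1" "z \<noteq> 0" "\<forall>i<k. euler_series a z i = 0"
  shows "zero_mult_ge (ps_fun a) z k"
  unfolding zero_mult_ge_def
proof (intro allI impI)
  fix i
  assume "i < k"
  then have "\<forall>j\<le>i. euler_series a z j = 0"
    using assms(4) by auto
  then show "(deriv ^^ i) (ps_fun a) z = 0"
    using assms(1-3) by (intro higher_deriv_ps_fun_eq_0)
qed


section \<open>Truncated Euler series\<close>

lemma euler_partial_cnj: "euler_partial M a (cnj z) i = cnj (euler_partial M a z i)"
  by (simp add: euler_partial_def)

lemma euler_partial_real: "z \<in> \<real> \<Longrightarrow> euler_partial M a z i \<in> \<real>"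
  by (metis Reals_cnj_iff euler_partial_cnj)

lemma euler_partial_diff:
  "euler_partial M (\<lambda>n. a n - b n) z i = euler_partial M a z i - euler_partial M b z i"
  by (simp add: euler_partial_def sum_subtractf[symmetric] algebra_simps)

lemma euler_series_eq_partial:
  assumes "\<forall>n\<ge>M. a n = 0"
  shows "euler_series a z i = euler_partial M a z i"
  unfolding euler_series_def euler_partial_def using assms by (intro suminf_finite) auto

lemma norm_euler_partial_le:
  assumes "\<forall>n<M. \<bar>a n\<bar> \<le> 1" "i \<le> K" "norm z < 1"
  shows "norm (euler_partial M a z i) \<le> (1 + real M) ^ K / (1 - norm z)"
proof -
  have "norm (euler_partial M a z i) \<le> (\<Sum>n<M. norm (of_int (a n) * of_nat n ^ i * z ^ n :: complex))"
    unfolding euler_partial_def by (rule norm_sum)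
  also have "\<dots> \<le> (\<Sum>n<M. (1 + real M) ^ K * norm z ^ n)"
  proof (intro sum_mono)
    fix n
    assume n: "n \<in> {..<M}"
    have "real n ^ i \<le> (1 + real M) ^ i"
      using n by (intro power_mono) auto
    also have "\<dots> \<le> (1 + real M) ^ K"
      using assms(2) by (intro power_increasing) auto
    finally have "real n ^ i * norm z ^ n \<le> (1 + real M) ^ K * norm z ^ n"
      by (rule mult_right_mono) simp
    moreover have "norm (of_int (a n) * of_nat n ^ i * z ^ n :: complex) \<le> real n ^ i * norm z ^ n"
      using assms(1) n by (intro norm_euler_term_le) auto
    ultimately show "norm (of_int (a n) * of_nat n ^ i * z ^ n :: complex) \<le> (1 + real M) ^ K * norm z ^ n"
      by linarith
  qed
  also have "\<dots> = (1 + real M) ^ K * ((1 - norm z ^ M) / (1 - norm z))"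
    using assms(3) by (subst sum_distrib_left[symmetric], subst sum_gp_strict) auto
  also have "\<dots> \<le> (1 + real M) ^ K * (1 / (1 - norm z))"
    using assms(3) by (intro mult_left_mono divide_right_mono) auto
  finally show ?thesis
    by simp
qed

lemma euler_partial_shift:
  assumes "\<forall>n<s. g n = 0" "\<forall>n\<ge>M. g n = 0"
  shows "z ^ s * euler_partial M (\<lambda>n. g (n + s)) z i =
    (\<Sum>j\<le>i. of_nat (i choose j) * (- of_nat s) ^ (i - j) * euler_partial M g z j)"
proof -
  define F where "F m = of_int (g m) * (of_nat m - of_nat s) ^ i * z ^ m" for m
  have "z ^ s * euler_partial M (\<lambda>n. g (n + s)) z i = (\<Sum>n<M. F (n + s))"
    unfolding euler_partial_def F_def sum_distrib_left by (intro sum.cong refl) (simp add: power_add mult_ac)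
  also have "\<dots> = (\<Sum>m\<in>{s..<M+s}. F m)"
    using sum.shift_bounds_nat_ivl[of F 0 s M] by (simp add: atLeast0LessThan)
  also have "\<dots> = (\<Sum>m<M+s. F m)"
    using assms(1) by (intro sum.mono_neutral_left) (auto simp: F_def)
  also have "\<dots> = (\<Sum>m<M. F m)"
    using assms(2) by (intro sum.mono_neutral_right) (auto simp: F_def)
  also have "\<dots> = (\<Sum>m<M. \<Sum>j\<le>i. of_nat (i choose j) * (- of_nat s) ^ (i - j) * (of_int (g m) * of_nat m ^ j * z ^ m))"
  proof (intro sum.cong refl)
    fix m
    have "(of_nat m - of_nat s :: complex) ^ i = (\<Sum>j\<le>i. of_nat (i choose j) * of_nat m ^ j * (- of_nat s) ^ (i - j))"
      using binomial_ring[of "of_nat m" "- of_nat s :: complex" i] by simp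
    then show "F m = (\<Sum>j\<le>i. of_nat (i choose j) * (- of_nat s) ^ (i - j) * (of_int (g m) * of_nat m ^ j * z ^ m))"
      unfolding F_def by (simp add: sum_distrib_left sum_distrib_right mult_ac)
  qed
  also have "\<dots> = (\<Sum>j\<le>i. of_nat (i choose j) * (- of_nat s) ^ (i - j) * euler_partial M g z j)"
    by (subst sum.swap) (simp add: euler_partial_def sum_distrib_left)
  finally show ?thesis .
qed

lemma norm_euler_partial_shift_le:
  assumes "\<forall>n<s. g n = 0" "\<forall>n\<ge>M. g n = 0" "\<forall>j\<le>i. norm (euler_partial M g z j) \<le> \<beta>"
  shows "norm z ^ s * norm (euler_partial M (\<lambda>n. g (n + s)) z i) \<le> (1 + real s) ^ i * \<beta>"
proof -
  have "norm z ^ s * norm (euler_partial M (\<lambda>n. g (n + s)) z i) =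
      norm (\<Sum>j\<le>i. of_nat (i choose j) * (- of_nat s) ^ (i - j) * euler_partial M g z j)"
    by (simp flip: euler_partial_shift[OF assms(1,2)] add: norm_mult norm_power)
  also have "\<dots> \<le> (\<Sum>j\<le>i. norm (of_nat (i choose j) * (- of_nat s) ^ (i - j) * euler_partial M g z j :: complex))"
    by (rule norm_sum)
  also have "\<dots> \<le> (\<Sum>j\<le>i. real (i choose j) * 1 ^ j * real s ^ (i - j) * \<beta>)"
    using assms(3) by (intro sum_mono) (simp add: norm_mult norm_power mult_left_mono)
  also have "\<dots> = (1 + real s) ^ i * \<beta>"
    by (simp flip: sum_distrib_right add: binomial_ring[of 1 "real s" i])
  finally show ?thesis .
qed

lemma norm_euler_series_tail_le:
  assumes "\<forall>n. \<bar>a n\<bar> \<le> 1" "norm z \<le> r" "r < 1"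
  shows "norm (euler_series a z i - euler_partial n0 a z i) \<le> (\<Sum>j. real (j + n0) ^ i * r ^ (j + n0))"
proof -
  have "0 \<le> r"
    using assms(2) norm_ge_zero order_trans by blast
  have "summable (\<lambda>n. of_int (a n) * of_nat n ^ i * z ^ n :: complex)"
    using summable_norm_euler_series[OF assms] by (rule summable_norm_cancel)
  from suminf_split_initial_segment[OF this, of n0]
  have "euler_series a z i - euler_partial n0 a z i =
      (\<Sum>j. of_int (a (j + n0)) * of_nat (j + n0) ^ i * z ^ (j + n0))"
    unfolding euler_series_def euler_partial_def by simp
  also have "norm \<dots> \<le> (\<Sum>j. real (j + n0) ^ i * r ^ (j + n0))"
  proof (rule norm_suminf_le)
    show "norm (of_int (a (j + n0)) * of_nat (j + n0) ^ i * z ^ (j + n0) :: complex) \<le> real (j + n0) ^ i * r ^ (j + n0)" for j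
      using assms by (intro norm_euler_term_le) auto
    show "summable (\<lambda>j. real (j + n0) ^ i * r ^ (j + n0))"
      using summable_ignore_initial_segment[OF summable_real_power_mult_geometric[OF \<open>0 \<le> r\<close> assms(3)], of n0]
      by simp
  qed
  finally show ?thesis .
qed

lemma norm_euler_series_diff_le:
  assumes "\<forall>n. \<bar>a n\<bar> \<le> 1" "\<forall>n. \<bar>b n\<bar> \<le> 1" "\<forall>j<n0. a j = b j"
    and "norm z \<le> r" "norm w \<le> r" "r < 1"
  shows "norm (euler_series a z i - euler_series b w i) \<le>
    2 * (\<Sum>j. real (j + n0) ^ i * r ^ (j + n0)) + (\<Sum>j<n0. real j ^ i * norm (z ^ j - w ^ j))"
proof -
  have "norm (euler_partial n0 a z i - euler_partial n0 b w i) =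
      norm (\<Sum>j<n0. of_int (a j) * of_nat j ^ i * (z ^ j - w ^ j))"
    unfolding euler_partial_def using assms(3) by (simp add: sum_subtractf[symmetric] algebra_simps)
  also have "\<dots> \<le> (\<Sum>j<n0. norm (of_int (a j) * of_nat j ^ i * (z ^ j - w ^ j) :: complex))"
    by (rule norm_sum)
  also have "\<dots> \<le> (\<Sum>j<n0. real j ^ i * norm (z ^ j - w ^ j))"
  proof (intro sum_mono)
    fix j
    have "\<bar>real_of_int (a j)\<bar> \<le> 1"
      using assms(1) by (metis of_int_abs of_int_le_1_iff)
    then have "\<bar>real_of_int (a j)\<bar> * (real j ^ i * norm (z ^ j - w ^ j)) \<le> 1 * (real j ^ i * norm (z ^ j - w ^ j))"
      by (intro mult_right_mono) auto
    then show "norm (of_int (a j) * of_nat j ^ i * (z ^ j - w ^ j) :: complex) \<le> real j ^ i * norm (z ^ j - w ^ j)"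
      by (simp add: norm_mult norm_power mult.assoc)
  qed
  finally have "norm (euler_partial n0 a z i - euler_partial n0 b w i) \<le> (\<Sum>j<n0. real j ^ i * norm (z ^ j - w ^ j))" .
  moreover have "norm (euler_series a z i - euler_partial n0 a z i) \<le> (\<Sum>j. real (j + n0) ^ i * r ^ (j + n0))"
    using assms(1,4,6) by (rule norm_euler_series_tail_le)
  moreover have "norm (euler_series b w i - euler_partial n0 b w i) \<le> (\<Sum>j. real (j + n0) ^ i * r ^ (j + n0))"
    using assms(2,5,6) by (rule norm_euler_series_tail_le)
  ultimately show ?thesis
    using norm_triangle_ineq4[of "euler_series a z i - euler_partial n0 a z i + (euler_partial n0 a z i - euler_partial n0 b w i)"
        "euler_series b w i - euler_partial n0 b w i"]
      norm_triangle_ineq[of "euler_series a z i - euler_partial n0 a z i" "euler_partial n0 a z i - euler_partial n0 b w i"]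
    by (simp add: algebra_simps)
qed


section \<open>Pigeonhole on polynomials with coefficients in \<open>{0, 1}\<close>\<close>

lemma real_card_PiE_int_intervals_le:
  assumes "finite I" "\<forall>x\<in>I. 0 \<le> c x"
  shows "real (card (PiE I (\<lambda>x. {- \<lceil>c x\<rceil>..\<lceil>c x\<rceil>}))) \<le> (\<Prod>x\<in>I. 2 * c x + 3)"
proof -
  have "real (card (PiE I (\<lambda>x. {- \<lceil>c x\<rceil>..\<lceil>c x\<rceil>}))) = (\<Prod>x\<in>I. real (nat (2 * \<lceil>c x\<rceil> + 1)))"
    using assms(1) by (simp add: card_PiE)
  also have "\<dots> \<le> (\<Prod>x\<in>I. 2 * c x + 3)"
  proof (rule prod_mono)
    fix x
    assume "x \<in> I"
    then have "0 \<le> c x"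
      using assms(2) by blast
    then show "0 \<le> real (nat (2 * \<lceil>c x\<rceil> + 1)) \<and> real (nat (2 * \<lceil>c x\<rceil> + 1)) \<le> 2 * c x + 3"
      by linarith
  qed
  finally show ?thesis .
qed

lemma pigeonhole_close_pair:
  fixes F :: "'e \<Rightarrow> 'x \<Rightarrow> real"
  assumes "finite I" "finite E" "\<forall>x\<in>I. 0 < \<delta> x \<and> 0 \<le> R x" "\<forall>e\<in>E. \<forall>x\<in>I. \<bar>F e x\<bar> \<le> R x"
    and "(\<Prod>x\<in>I. 2 * R x / \<delta> x + 3) < real (card E)"
  obtains e e' where "e \<in> E" "e' \<in> E" "e \<noteq> e'" "\<forall>x\<in>I. \<bar>F e x - F e' x\<bar> < \<delta> x"
proof -
  define cell where "cell e = restrict (\<lambda>x. \<lfloor>F e x / \<delta> x\<rfloor>) I" for e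
  define T where "T = PiE I (\<lambda>x. {- \<lceil>R x / \<delta> x\<rceil>..\<lceil>R x / \<delta> x\<rceil>})"
  have "cell ` E \<subseteq> T"
  proof (clarsimp simp: cell_def T_def restrict_PiE_iff)
    fix e x
    assume "e \<in> E" "x \<in> I"
    then have "0 < \<delta> x" "\<bar>F e x\<bar> \<le> R x"
      using assms(3,4) by auto
    then have "\<bar>F e x / \<delta> x\<bar> \<le> R x / \<delta> x"
      by (simp add: abs_divide divide_right_mono)
    then show "- \<lceil>R x / \<delta> x\<rceil> \<le> \<lfloor>F e x / \<delta> x\<rfloor> \<and> \<lfloor>F e x / \<delta> x\<rfloor> \<le> \<lceil>R x / \<delta> x\<rceil>"
      by (intro conjI; linarith)
  qed
  moreover have "finite T"
    unfolding T_def using assms(1) by (intro finite_PiE) auto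
  ultimately have "card (cell ` E) \<le> card T"
    by (rule card_mono[rotated])
  moreover have "real (card T) \<le> (\<Prod>x\<in>I. 2 * R x / \<delta> x + 3)"
  proof -
    have "\<forall>x\<in>I. 0 \<le> R x / \<delta> x"
      using assms(3) by (auto intro: divide_nonneg_pos)
    from real_card_PiE_int_intervals_le[OF assms(1) this] show ?thesis
      unfolding T_def by simp
  qed
  ultimately have "card (cell ` E) < card E"
    using assms(5) by linarith
  then obtain e e' where "e \<in> E" "e' \<in> E" "e \<noteq> e'" "cell e = cell e'"
    using pigeonhole unfolding inj_on_def by blast
  moreover have "\<bar>F e x - F e' x\<bar> < \<delta> x" if "cell e = cell e'" "x \<in> I" for e e' x
  proof -
    have "cell e x = cell e' x"
      using that(1) by simp
    then have "\<lfloor>F e x / \<delta> x\<rfloor> = \<lfloor>F e' x / \<delta> x\<rfloor>"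
      using that(2) by (simp add: cell_def)
    then have "\<bar>(F e x - F e' x) / \<delta> x\<bar> < 1"
      by (simp add: diff_divide_distrib) linarith
    moreover have "0 < \<delta> x"
      using assms(3) that(2) by blast
    ultimately show ?thesis
      by (simp add: abs_divide)
  qed
  ultimately show ?thesis
    using that by blast
qed

text \<open>At a point of the closed upper half plane only the real part of a value is recorded, at a
  point of the lower half plane only its imaginary part. For a set of points closed under
  conjugation and data commuting with conjugation this controls each value with one real
  coordinate instead of two; this is where the constant \<open>1/2\<close> comes from.\<close>
definition conj_coord :: "complex \<Rightarrow> complex \<Rightarrow> real" where
  "conj_coord z w = (if 0 \<le> Im z then Re w else Im w)"

lemma conj_coord_diff: "conj_coord z (u - v) = conj_coord z u - conj_coord z v"
  by (simp add: conj_coord_def)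

lemma abs_conj_coord_le: "\<bar>conj_coord z w\<bar> \<le> norm w"
  by (simp add: conj_coord_def abs_Re_le_cmod abs_Im_le_cmod)

lemma norm_le_conj_coord:
  assumes "\<bar>conj_coord z w\<bar> < \<delta>" "\<bar>conj_coord (cnj z) (cnj w)\<bar> < \<delta>" "z \<in> \<real> \<Longrightarrow> w \<in> \<real>"
  shows "norm w \<le> 2 * \<delta>"
proof -
  have "\<bar>Re w\<bar> < \<delta> \<and> \<bar>Im w\<bar> < \<delta>"
    using assms by (cases "Im z" "0::real" rule: linorder_cases) (auto simp: conj_coord_def complex_is_Real_iff)
  then show ?thesis
    using cmod_le[of w] by linarith
qed

text \<open>The product counts the boxes of the pigeonhole step below; it is polynomial in \<open>M\<close>
  divided by \<open>(\<Prod>z\<in>L. norm z ^ k z) ^ M\<close>, hence eventually below \<open>2 ^ M\<close>.\<close>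
lemma eventually_quantization_count_lt:
  fixes L :: "complex set" and k :: "complex \<Rightarrow> nat" and \<epsilon> :: real
  assumes "finite L" "\<forall>z\<in>L. 0 < norm z \<and> norm z < 1" "(\<Prod>z\<in>L. norm z ^ k z) > 1/2" "\<epsilon> > 0"
  shows "\<forall>\<^sub>F M in sequentially.
    (\<Prod>z\<in>L. (4 * (1 + real M) ^ (2 * sum k L) / (\<epsilon> * (1 - norm z) * norm z ^ M) + 3) ^ k z) < 2 ^ M"
proof -
  define S where "S = sum k L"
  define P where "P = (\<Prod>z\<in>L. norm z ^ k z)"
  define C where "C = (\<Prod>z\<in>L. (4 / (\<epsilon> * (1 - norm z)) + 3) ^ k z)"
  have "2 * P > 1"
    using assms(3) by (simp add: P_def)
  then have "(\<lambda>M. C * (1 + real M) ^ (2 * S * S) / (2 * P) ^ M) \<longlonglongrightarrow> 0"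
    by real_asymp
  then have "\<forall>\<^sub>F M in sequentially. C * (1 + real M) ^ (2 * S * S) / (2 * P) ^ M < 1"
    by (rule order_tendstoD) simp
  then show ?thesis
    unfolding S_def[symmetric]
  proof (rule eventually_mono)
    fix M
    assume lt: "C * (1 + real M) ^ (2 * S * S) / (2 * P) ^ M < 1"
    define Q where "Q z = (1 + real M) ^ (2 * S) / norm z ^ M" for z :: complex
    have factor: "0 \<le> 4 * (1 + real M) ^ (2 * S) / (\<epsilon> * (1 - norm z) * norm z ^ M) + 3 \<and>
        4 * (1 + real M) ^ (2 * S) / (\<epsilon> * (1 - norm z) * norm z ^ M) + 3 \<le> (4 / (\<epsilon> * (1 - norm z)) + 3) * Q z"
      if "z \<in> L" for z
    proof -
      have z: "0 < norm z" "norm z < 1"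
        using assms(2) that by auto
      have "norm z ^ M \<le> 1 * (1 + real M) ^ (2 * S)"
        using z by (simp add: power_le_one one_le_power order_trans[OF power_le_one])
      then have "1 \<le> Q z"
        using z by (simp add: Q_def)
      moreover have "4 * (1 + real M) ^ (2 * S) / (\<epsilon> * (1 - norm z) * norm z ^ M) = 4 / (\<epsilon> * (1 - norm z)) * Q z"
        by (simp add: Q_def)
      moreover have "0 \<le> 4 / (\<epsilon> * (1 - norm z))"
        using z assms(4) by simp
      ultimately show ?thesis
        using z assms(4) by (simp add: algebra_simps)
    qed
    have "(\<Prod>z\<in>L. (4 * (1 + real M) ^ (2 * S) / (\<epsilon> * (1 - norm z) * norm z ^ M) + 3) ^ k z)
        \<le> (\<Prod>z\<in>L. ((4 / (\<epsilon> * (1 - norm z)) + 3) * Q z) ^ k z)"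
      using factor by (intro prod_mono) (simp add: power_mono)
    also have "\<dots> = C * (\<Prod>z\<in>L. Q z ^ k z)"
      by (simp add: C_def power_mult_distrib prod.distrib)
    also have "(\<Prod>z\<in>L. Q z ^ k z) = (\<Prod>z\<in>L. ((1 + real M) ^ (2 * S)) ^ k z / (norm z ^ k z) ^ M)"
      by (intro prod.cong refl) (simp add: Q_def power_divide power_mult[symmetric] mult.commute)
    also have "\<dots> = (1 + real M) ^ (2 * S * S) / P ^ M"
      by (simp add: prod_dividef power_sum prod_power_distrib P_def S_def power_mult)
    also have "C * ((1 + real M) ^ (2 * S * S) / P ^ M) = C * (1 + real M) ^ (2 * S * S) / (2 * P) ^ M * 2 ^ M"
      by (simp add: power_mult_distrib)
    also have "\<dots> < 1 * 2 ^ M"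
      by (rule mult_strict_right_mono[OF lt]) simp
    finally show "(\<Prod>z\<in>L. (4 * (1 + real M) ^ (2 * S) / (\<epsilon> * (1 - norm z) * norm z ^ M) + 3) ^ k z) < 2 ^ M"
      by simp
  qed
qed

lemma exists_close_pair_01_coeffs:
  fixes L :: "complex set" and k :: "complex \<Rightarrow> nat" and \<delta> :: "complex \<Rightarrow> real"
  assumes fin: "finite L" and disk: "\<forall>z\<in>L. norm z < 1" and \<delta>: "\<forall>z\<in>L. 0 < \<delta> z" and K: "\<forall>z\<in>L. k z \<le> K"
    and count: "(\<Prod>z\<in>L. (2 * ((1 + real M) ^ K / (1 - norm z)) / \<delta> z + 3) ^ k z) < 2 ^ M"
  obtains e e' where "e \<in> {..<M} \<rightarrow>\<^sub>E {0, 1}" "e' \<in> {..<M} \<rightarrow>\<^sub>E {0, 1}" "e \<noteq> e'"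
    "\<forall>z\<in>L. \<forall>i<k z. \<bar>conj_coord z (euler_partial M e z i) - conj_coord z (euler_partial M e' z i)\<bar> < \<delta> z"
proof -
  define I where "I = Sigma L (\<lambda>z. {..<k z})"
  define E where "E = {..<M} \<rightarrow>\<^sub>E {0::int, 1}"
  define R where "R z = (1 + real M) ^ K / (1 - norm z)" for z :: complex
  have "finite I"
    using fin by (simp add: I_def)
  moreover have "finite E"
    by (simp add: E_def finite_PiE)
  moreover have "\<forall>x\<in>I. 0 < \<delta> (fst x) \<and> 0 \<le> R (fst x)"
    using \<delta> disk by (auto simp: I_def R_def less_imp_le)
  moreover have "\<forall>e\<in>E. \<forall>x\<in>I. \<bar>conj_coord (fst x) (euler_partial M e (fst x) (snd x))\<bar> \<le> R (fst x)"
  proof (clarsimp simp: I_def)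
    fix e z i
    assume "e \<in> E" "z \<in> L" "i < k z"
    moreover have "\<forall>n<M. \<bar>e n\<bar> \<le> 1"
    proof (intro allI impI)
      fix n
      assume "n < M"
      then have "e n \<in> {0, 1}"
        using PiE_mem[OF \<open>e \<in> E\<close>[unfolded E_def]] by simp
      then show "\<bar>e n\<bar> \<le> 1"
        by auto
    qed
    ultimately have "norm (euler_partial M e z i) \<le> R z"
      unfolding R_def using disk K by (intro norm_euler_partial_le) (auto intro: less_imp_le order_trans)
    then show "\<bar>conj_coord z (euler_partial M e z i)\<bar> \<le> R z"
      using abs_conj_coord_le order_trans by blast
  qed
  moreover have "(\<Prod>x\<in>I. 2 * R (fst x) / \<delta> (fst x) + 3) < real (card E)"
  proof -
    have "(\<Prod>z\<in>L. (2 * R z / \<delta> z + 3) ^ k z) = (\<Prod>z\<in>L. \<Prod>i<k z. 2 * R z / \<delta> z + 3)"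
      by simp
    also have "\<dots> = (\<Prod>x\<in>I. 2 * R (fst x) / \<delta> (fst x) + 3)"
      unfolding I_def using fin by (subst prod.Sigma) (auto simp: split_def)
    finally show ?thesis
      using count by (simp add: R_def E_def card_PiE)
  qed
  ultimately obtain e e' where e: "e \<in> E" "e' \<in> E" "e \<noteq> e'" and close:
    "\<forall>x\<in>I. \<bar>conj_coord (fst x) (euler_partial M e (fst x) (snd x)) -
      conj_coord (fst x) (euler_partial M e' (fst x) (snd x))\<bar> < \<delta> (fst x)"
    by (rule pigeonhole_close_pair)
  have "\<forall>z\<in>L. \<forall>i<k z. \<bar>conj_coord z (euler_partial M e z i) - conj_coord z (euler_partial M e' z i)\<bar> < \<delta> z"
  proof (intro ballI allI impI)
    fix z i
    assume "z \<in> L" "i < k z"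
    then have "(z, i) \<in> I"
      by (simp add: I_def)
    then show "\<bar>conj_coord z (euler_partial M e z i) - conj_coord z (euler_partial M e' z i)\<bar> < \<delta> z"
      using close by fastforce
  qed
  with e show ?thesis
    unfolding E_def by (rule that)
qed

lemma exists_nonzero_small_euler_partial:
  fixes L :: "complex set" and k :: "complex \<Rightarrow> nat" and \<delta> :: "complex \<Rightarrow> real"
  assumes fin: "finite L" and disk: "\<forall>z\<in>L. norm z < 1" and cnj_closed: "\<forall>z\<in>L. cnj z \<in> L \<and> k (cnj z) = k z"
    and \<delta>: "\<forall>z\<in>L. 0 < \<delta> z \<and> \<delta> (cnj z) = \<delta> z" and K: "\<forall>z\<in>L. k z \<le> K"
    and count: "(\<Prod>z\<in>L. (2 * ((1 + real M) ^ K / (1 - norm z)) / \<delta> z + 3) ^ k z) < 2 ^ M"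
  obtains g where "\<forall>n. g n \<in> {-1, 0, 1}" "\<exists>n. g n \<noteq> 0" "\<forall>n\<ge>M. g n = 0"
    "\<forall>z\<in>L. \<forall>i<k z. norm (euler_partial M g z i) \<le> 2 * \<delta> z"
proof -
  have "\<forall>z\<in>L. 0 < \<delta> z"
    using \<delta> by blast
  then obtain e e' where e: "e \<in> {..<M} \<rightarrow>\<^sub>E {0::int, 1}" "e' \<in> {..<M} \<rightarrow>\<^sub>E {0::int, 1}" "e \<noteq> e'"
    and close: "\<forall>z\<in>L. \<forall>i<k z. \<bar>conj_coord z (euler_partial M e z i) - conj_coord z (euler_partial M e' z i)\<bar> < \<delta> z"
    by (rule exists_close_pair_01_coeffs[OF fin disk _ K count])
  define g where "g n = (if n < M then e n - e' n else 0)" for n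
  have e01: "e n \<in> {0, 1} \<and> e' n \<in> {0, 1}" if "n < M" for n
    using that PiE_mem[OF e(1)] PiE_mem[OF e(2)] by simp
  have "\<forall>n. g n \<in> {-1, 0, 1}"
  proof
    fix n
    show "g n \<in> {-1, 0, 1}"
      using e01[of n] by (cases "n < M") (auto simp: g_def)
  qed
  moreover have "\<exists>n. g n \<noteq> 0"
  proof -
    have "e \<in> extensional {..<M}" "e' \<in> extensional {..<M}"
      using e(1,2) by (auto simp: PiE_def)
    then obtain n where "n \<in> {..<M}" "e n \<noteq> e' n"
      using e(3) extensionalityI[of e "{..<M}" e'] by blast
    then show ?thesis
      by (intro exI[of _ n]) (simp add: g_def)
  qed
  moreover have "\<forall>n\<ge>M. g n = 0"
    by (simp add: g_def)
  moreover have "norm (euler_partial M g z i) \<le> 2 * \<delta> z" if z: "z \<in> L" and i: "i < k z" for z i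
  proof -
    have g_diff: "euler_partial M g w j = euler_partial M e w j - euler_partial M e' w j" for w j
    proof -
      have "euler_partial M g w j = euler_partial M (\<lambda>n. e n - e' n) w j"
        unfolding euler_partial_def g_def by (intro sum.cong) auto
      then show ?thesis
        by (simp add: euler_partial_diff)
    qed
    have cnj_z: "cnj z \<in> L" "i < k (cnj z)" "\<delta> (cnj z) = \<delta> z"
      using cnj_closed \<delta> z i by auto
    have "\<bar>conj_coord z (euler_partial M g z i)\<bar> < \<delta> z"
      using close[rule_format, OF z i] by (simp add: g_diff conj_coord_diff)
    moreover have "\<bar>conj_coord (cnj z) (cnj (euler_partial M g z i))\<bar> < \<delta> z"
      using close[rule_format, OF cnj_z(1,2)] cnj_z(3) by (simp add: g_diff conj_coord_diff flip: euler_partial_cnj)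
    ultimately show ?thesis
      using euler_partial_real by (rule norm_le_conj_coord)
  qed
  ultimately show ?thesis
    using that by blast
qed

lemma normalize_lowest_coeff:
  assumes gv: "\<forall>n. g n \<in> {-1, 0, 1}" and nz: "\<exists>n. g n \<noteq> 0" and gM: "\<forall>n\<ge>M. g n = 0"
  obtains s h where "s < M" "h \<in> coeffs_B"
    "\<And>z i \<beta>. \<forall>j\<le>i. norm (euler_partial M g z j) \<le> \<beta> \<Longrightarrow>
      norm z ^ s * norm (euler_series h z i) \<le> (1 + real s) ^ i * \<beta>"
proof -
  define s where "s = (LEAST n. g n \<noteq> 0)"
  have gs: "g s \<noteq> 0"
    using nz unfolding s_def by (rule LeastI_ex)
  have below: "\<forall>n<s. g n = 0"
    unfolding s_def using not_less_Least by blast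
  have "s < M"
    using gs gM leI by blast
  define h where "h n = g s * g (n + s)" for n
  have sign: "g s = 1 \<or> g s = -1"
    using gs gv[rule_format, of s] by auto
  have "h \<in> coeffs_B"
    unfolding coeffs_B_iff
  proof
    show "h 0 = 1"
      using sign by (auto simp: h_def)
    show "\<forall>n. h n \<in> {-1, 0, 1}"
    proof
      fix n
      show "h n \<in> {-1, 0, 1}"
        using sign gv[rule_format, of "n + s"] by (auto simp: h_def)
    qed
  qed
  moreover have bound: "norm z ^ s * norm (euler_series h z i) \<le> (1 + real s) ^ i * \<beta>"
    if "\<forall>j\<le>i. norm (euler_partial M g z j) \<le> \<beta>" for z i \<beta>
  proof -
    have "euler_series h z i = euler_partial M h z i"
      using gM by (intro euler_series_eq_partial) (simp add: h_def)
    also have "\<dots> = of_int (g s) * euler_partial M (\<lambda>n. g (n + s)) z i"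
      by (simp add: euler_partial_def h_def sum_distrib_left mult.assoc)
    finally have "norm (euler_series h z i) = norm (euler_partial M (\<lambda>n. g (n + s)) z i)"
      using sign by (auto simp: norm_mult)
    then show ?thesis
      using norm_euler_partial_shift_le[OF below gM that] by simp
  qed
  ultimately show ?thesis
    using bound by (intro that[OF \<open>s < M\<close>])
qed

lemma exists_B_small_euler_series:
  fixes L :: "complex set" and k :: "complex \<Rightarrow> nat" and \<epsilon> :: real
  assumes fin: "finite L" and Lz: "\<forall>z\<in>L. 0 < norm z \<and> norm z < 1"
    and cnj_closed: "\<forall>z\<in>L. cnj z \<in> L \<and> k (cnj z) = k z"
    and prod_gt: "(\<Prod>z\<in>L. norm z ^ k z) > 1/2" and eps: "\<epsilon> > 0"
  shows "\<exists>h\<in>coeffs_B. \<forall>z\<in>L. \<forall>i<k z. norm (euler_series h z i) \<le> \<epsilon>"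
proof -
  define S where "S = sum k L"
  obtain M where count:
    "(\<Prod>z\<in>L. (4 * (1 + real M) ^ (2 * S) / (\<epsilon> * (1 - norm z) * norm z ^ M) + 3) ^ k z) < 2 ^ M"
    using eventually_quantization_count_lt[OF fin Lz prod_gt eps] unfolding S_def eventually_sequentially
    by blast
  define A where "A = (1 + real M) ^ S"
  \<comment> \<open>Normalising by the lowest coefficient below loses at most a factor \<open>A / norm z ^ M\<close>.\<close>
  define \<delta> where "\<delta> z = \<epsilon> * norm z ^ M / (2 * A)" for z :: complex
  have "A \<ge> 1"
    by (simp add: A_def)
  have \<delta>: "\<forall>z\<in>L. 0 < \<delta> z \<and> \<delta> (cnj z) = \<delta> z"
    using Lz eps \<open>A \<ge> 1\<close> by (simp add: \<delta>_def)
  have K: "\<forall>z\<in>L. k z \<le> S"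
    unfolding S_def using fin by (simp add: member_le_sum)
  have "2 * (A / (1 - norm z)) / \<delta> z = 4 * (1 + real M) ^ (2 * S) / (\<epsilon> * (1 - norm z) * norm z ^ M)"
    if "z \<in> L" for z
    using Lz that eps \<open>A \<ge> 1\<close> by (simp add: \<delta>_def A_def field_simps power_mult power2_eq_square mult.commute[of 2 S])
  then have "(\<Prod>z\<in>L. (2 * (A / (1 - norm z)) / \<delta> z + 3) ^ k z) < 2 ^ M"
    using count by (simp cong: prod.cong)
  then obtain g where g: "\<forall>n. g n \<in> {-1, 0, 1}" "\<exists>n. g n \<noteq> 0" "\<forall>n\<ge>M. g n = 0"
    and small: "\<forall>z\<in>L. \<forall>i<k z. norm (euler_partial M g z i) \<le> 2 * \<delta> z"
    using exists_nonzero_small_euler_partial[OF fin _ cnj_closed \<delta> K] Lz unfolding A_def by blast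
  obtain s h where "s < M" "h \<in> coeffs_B"
    and shift: "\<And>z i \<beta>. \<forall>j\<le>i. norm (euler_partial M g z j) \<le> \<beta> \<Longrightarrow>
      norm z ^ s * norm (euler_series h z i) \<le> (1 + real s) ^ i * \<beta>"
    using normalize_lowest_coeff[OF g] by blast
  have "norm (euler_series h z i) \<le> \<epsilon>" if z: "z \<in> L" and i: "i < k z" for z i
  proof -
    have "norm z ^ s * norm (euler_series h z i) \<le> (1 + real s) ^ i * (2 * \<delta> z)"
      using small z i by (intro shift) auto
    also have "\<dots> \<le> A * (2 * \<delta> z)"
    proof (rule mult_right_mono)
      have "(1 + real s) ^ i \<le> (1 + real M) ^ i"
        using \<open>s < M\<close> by (intro power_mono) auto
      also have "\<dots> \<le> A"
        unfolding A_def using K z i by (intro power_increasing) auto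
      finally show "(1 + real s) ^ i \<le> A" .
    qed (use \<delta> z in \<open>simp add: less_imp_le\<close>)
    also have "\<dots> = \<epsilon> * norm z ^ M"
      using \<open>A \<ge> 1\<close> by (simp add: \<delta>_def)
    also have "\<dots> \<le> \<epsilon> * norm z ^ s"
      using eps Lz z \<open>s < M\<close> by (intro mult_left_mono power_decreasing) auto
    finally show ?thesis
      using Lz z by (simp add: mult.commute[of _ \<epsilon>])
  qed
  then show ?thesis
    using \<open>h \<in> coeffs_B\<close> by blast
qed


section \<open>The boundary case by a limiting argument\<close>

lemma exists_B_small_euler_series_scaled:
  fixes L :: "complex set" and k :: "complex \<Rightarrow> nat" and t \<epsilon> :: real
  assumes fin: "finite L" and Lz: "\<forall>z\<in>L. 0 < norm z" and cnj_closed: "\<forall>z\<in>L. cnj z \<in> L \<and> k (cnj z) = k z"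
    and prod_ge: "(\<Prod>z\<in>L. norm z ^ k z) \<ge> 1/2" and t: "1 < t" "\<forall>z\<in>L. t * norm z < 1" and eps: "\<epsilon> > 0"
  shows "\<exists>h\<in>coeffs_B. \<forall>z\<in>L. \<forall>i<k z. norm (euler_series h (of_real t * z) i) \<le> \<epsilon>"
proof -
  define L' where "L' = (\<lambda>z. of_real t * z) ` L"
  define k' where "k' w = k (w / of_real t)" for w
  have k': "k' (of_real t * z) = k z" for z
    using t by (simp add: k'_def)
  have inj: "inj_on (\<lambda>z. of_real t * z) L"
    using t by (auto simp: inj_on_def)
  have "(\<Prod>w\<in>L'. norm w ^ k' w) = (\<Prod>z\<in>L. (t * norm z) ^ k z)"
    unfolding L'_def using t by (simp add: prod.reindex[OF inj] k' norm_mult)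
  also have "\<dots> = t ^ sum k L * (\<Prod>z\<in>L. norm z ^ k z)"
    by (simp add: power_mult_distrib prod.distrib power_sum)
  finally have prod_eq: "(\<Prod>w\<in>L'. norm w ^ k' w) = t ^ sum k L * (\<Prod>z\<in>L. norm z ^ k z)" .
  have "(\<Prod>w\<in>L'. norm w ^ k' w) > 1/2"
  proof (cases "sum k L = 0")
    case True
    then show ?thesis
      using fin by (simp add: prod_eq)
  next
    case False
    then have "1 * (\<Prod>z\<in>L. norm z ^ k z) < t ^ sum k L * (\<Prod>z\<in>L. norm z ^ k z)"
      using t(1) prod_ge by (intro mult_strict_right_mono one_less_power) auto
    then show ?thesis
      unfolding prod_eq using prod_ge by linarith
  qed
  moreover have "\<forall>w\<in>L'. 0 < norm w \<and> norm w < 1"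
    using Lz t by (auto simp: L'_def norm_mult)
  moreover have "\<forall>w\<in>L'. cnj w \<in> L' \<and> k' (cnj w) = k' w"
    using cnj_closed by (auto simp: L'_def k')
  moreover have "finite L'"
    using fin by (simp add: L'_def)
  ultimately obtain h where "h \<in> coeffs_B"
    and small: "\<forall>w\<in>L'. \<forall>i<k' w. norm (euler_series h w i) \<le> \<epsilon>"
    using exists_B_small_euler_series[of L' k' \<epsilon>] eps by blast
  moreover have "\<forall>z\<in>L. \<forall>i<k z. norm (euler_series h (of_real t * z) i) \<le> \<epsilon>"
  proof (intro ballI allI impI)
    fix z i
    assume "z \<in> L" "i < k z"
    moreover have "of_real t * z \<in> L'"
      unfolding L'_def using \<open>z \<in> L\<close> by (rule imageI)
    ultimately show "norm (euler_series h (of_real t * z) i) \<le> \<epsilon>"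
      using small by (simp add: k')
  qed
  ultimately show ?thesis
    by blast
qed

lemma exists_prefix_cluster_point:
  fixes H :: "nat \<Rightarrow> nat \<Rightarrow> 'a"
  assumes "finite A" "\<And>m n. H m n \<in> A"
  obtains h where "\<And>n. h n \<in> A" "\<And>n. infinite {m. \<forall>j<n. H m j = h j}"
proof -
  define T where "T = rec_nat (UNIV :: nat set) (\<lambda>n X. {m\<in>X. H m n = (SOME v. infinite {m\<in>X. H m n = v})})"
  define h where "h n = (SOME v. infinite {m\<in>T n. H m n = v})" for n
  have T_Suc: "T (Suc n) = {m\<in>T n. H m n = h n}" for n
    by (simp add: T_def h_def)
  have T_infinite: "infinite (T n)" for n
  proof (induction n)
    case 0
    then show ?case by (simp add: T_def)
  next
    case (Suc n)
    have "(\<lambda>m. H m n) ` T n \<subseteq> A"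
      using assms(2) by blast
    then have "finite ((\<lambda>m. H m n) ` T n)"
      using assms(1) by (rule finite_subset)
    then have "\<exists>m0\<in>T n. infinite {m\<in>T n. H m n = H m0 n}"
      by (rule pigeonhole_infinite[OF Suc.IH])
    then have "\<exists>v. infinite {m\<in>T n. H m n = v}"
      by blast
    then have "infinite {m\<in>T n. H m n = h n}"
      unfolding h_def by (rule someI_ex)
    then show ?case
      by (simp add: T_Suc)
  qed
  have T_agree: "\<forall>j<n. H m j = h j" if "m \<in> T n" for m n
    using that by (induction n arbitrary: m) (auto simp: T_Suc less_Suc_eq)
  show ?thesis
  proof (rule that)
    show "h n \<in> A" for n
    proof -
      obtain m where "m \<in> T (Suc n)"
        using infinite_imp_nonempty[OF T_infinite[of "Suc n"]] by blast
      then show ?thesis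
        using T_agree[of m "Suc n"] assms(2)[of m n] by auto
    qed
    show "infinite {m. \<forall>j<n. H m j = h j}" for n
      using T_agree by (intro infinite_super[OF _ T_infinite[of n]]) blast
  qed
qed

lemma exists_coeffs_B_cluster_point:
  fixes H :: "nat \<Rightarrow> nat \<Rightarrow> int"
  assumes "\<And>m. H m \<in> coeffs_B"
  obtains h where "h \<in> coeffs_B" "\<And>n. infinite {m. \<forall>j<n. H m j = h j}"
proof -
  have "\<And>m n. H m n \<in> {-1, 0, 1}"
    using assms by (simp add: coeffs_B_iff)
  then obtain h where "\<And>n. h n \<in> {-1, 0, 1}" and cluster: "\<And>n. infinite {m. \<forall>j<n. H m j = h j}"
    by (rule exists_prefix_cluster_point[of "{-1, 0, 1}" H, rotated]) auto
  moreover obtain m where "\<forall>j<1. H m j = h j"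
    using infinite_imp_nonempty[OF cluster[of 1]] by blast
  ultimately have "h \<in> coeffs_B"
    using assms[of m] by (simp add: coeffs_B_iff)
  then show ?thesis
    using cluster by (rule that)
qed

lemma euler_series_eq_0_of_cluster_point:
  assumes h: "\<forall>n. \<bar>h n\<bar> \<le> 1" and H: "\<forall>m n. \<bar>H m n\<bar> \<le> 1"
    and cluster: "\<And>n. infinite {m. \<forall>j<n. H m j = h j}"
    and w: "w \<longlonglongrightarrow> z" "\<forall>m. norm (w m) \<le> r" "norm z \<le> r" "r < 1"
    and lim: "(\<lambda>m. euler_series (H m) (w m) i) \<longlonglongrightarrow> 0"
  shows "euler_series h z i = 0"
proof -
  have "norm (euler_series h z i) \<le> 0 + \<eta>" if "\<eta> > 0" for \<eta>
  proof -
    have "0 \<le> r"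
      using w(3) norm_ge_zero order_trans by blast
    have "0 < \<eta> / 4"
      using that by simp
    obtain n0 where "\<forall>n\<ge>n0. norm (\<Sum>j. real (j + n) ^ i * r ^ (j + n)) < \<eta> / 4"
      using suminf_exist_split[OF \<open>0 < \<eta> / 4\<close> summable_real_power_mult_geometric[OF \<open>0 \<le> r\<close> w(4), of i]]
      by blast
    then have tail: "(\<Sum>j. real (j + n0) ^ i * r ^ (j + n0)) < \<eta> / 4"
      by auto
    have "(\<lambda>m. \<Sum>j<n0. real j ^ i * norm (z ^ j - w m ^ j)) \<longlonglongrightarrow> (\<Sum>j<n0. real j ^ i * norm (z ^ j - z ^ j))"
      by (intro tendsto_intros w(1))
    then have "(\<lambda>m. \<Sum>j<n0. real j ^ i * norm (z ^ j - w m ^ j)) \<longlonglongrightarrow> 0"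
      by simp
    then have "\<forall>\<^sub>F m in sequentially. (\<Sum>j<n0. real j ^ i * norm (z ^ j - w m ^ j)) < \<eta> / 4"
      using \<open>0 < \<eta> / 4\<close> by (rule order_tendstoD(2))
    moreover have "\<forall>\<^sub>F m in sequentially. norm (euler_series (H m) (w m) i) < \<eta> / 4"
      using tendsto_norm_zero[OF lim] \<open>0 < \<eta> / 4\<close> by (rule order_tendstoD(2))
    ultimately have "\<forall>\<^sub>F m in sequentially.
        (\<Sum>j<n0. real j ^ i * norm (z ^ j - w m ^ j)) < \<eta> / 4 \<and> norm (euler_series (H m) (w m) i) < \<eta> / 4"
      by (rule eventually_conj)
    then obtain m0 where m0: "\<And>m. m \<ge> m0 \<Longrightarrow>
        (\<Sum>j<n0. real j ^ i * norm (z ^ j - w m ^ j)) < \<eta> / 4 \<and> norm (euler_series (H m) (w m) i) < \<eta> / 4"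
      unfolding eventually_sequentially by blast
    obtain m where "m \<ge> m0" "\<forall>j<n0. H m j = h j"
      using cluster[of n0] unfolding infinite_nat_iff_unbounded_le by blast
    then have "norm (euler_series h z i - euler_series (H m) (w m) i) \<le>
        2 * (\<Sum>j. real (j + n0) ^ i * r ^ (j + n0)) + (\<Sum>j<n0. real j ^ i * norm (z ^ j - w m ^ j))"
      using h H w by (intro norm_euler_series_diff_le) auto
    then show ?thesis
      using m0[OF \<open>m \<ge> m0\<close>] tail norm_triangle_sub[of "euler_series h z i" "euler_series (H m) (w m) i"]
      by linarith
  qed
  then have "norm (euler_series h z i) \<le> 0"
    by (rule field_le_epsilon)
  then show ?thesis
    by simp
qed

lemma exists_outward_scaling:
  fixes L :: "complex set"
  assumes "finite L" "\<forall>z\<in>L. norm z < 1"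
  obtains t :: "nat \<Rightarrow> real" and r where "\<forall>m. 1 < t m" "t \<longlonglongrightarrow> 1" "r < 1" "\<forall>z\<in>L. norm z \<le> r"
    "\<forall>m. \<forall>z\<in>L. t m * norm z \<le> r"
proof -
  \<comment> \<open>The element \<open>1/2\<close> keeps \<open>\<rho>\<close> positive even if \<open>L\<close> is empty or \<open>{0}\<close>.\<close>
  define \<rho> where "\<rho> = Max (insert (1/2) (norm ` L))"
  have "1/2 \<le> \<rho>"
    unfolding \<rho>_def using assms(1) by (intro Max_ge) auto
  moreover have "\<rho> \<in> insert (1/2) (norm ` L)"
    unfolding \<rho>_def using assms(1) by (intro Max_in) auto
  ultimately have \<rho>: "0 < \<rho>" "\<rho> < 1"
    using assms(2) by auto
  have norm_le_\<rho>: "\<forall>z\<in>L. norm z \<le> \<rho>"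
    unfolding \<rho>_def using assms(1) by auto
  define r where "r = (1 + \<rho>) / 2"
  have r: "\<rho> < r" "r < 1"
    using \<rho> by (auto simp: r_def)
  define t where "t m = 1 + (r / \<rho> - 1) / (real m + 1)" for m :: nat
  have "1 < r / \<rho>"
    using r \<rho> by simp
  then have t_gt_1: "\<forall>m. 1 < t m"
    by (simp add: t_def)
  have "\<forall>m. \<forall>z\<in>L. t m * norm z \<le> r"
  proof (intro allI ballI)
    fix m z
    assume "z \<in> L"
    have "(r / \<rho> - 1) / (real m + 1) \<le> (r / \<rho> - 1) / 1"
      using \<open>1 < r / \<rho>\<close> by (intro divide_left_mono) auto
    then have "t m \<le> r / \<rho>"
      by (simp add: t_def)
    then have "t m * norm z \<le> r / \<rho> * \<rho>"
      using norm_le_\<rho> \<open>z \<in> L\<close> t_gt_1 \<rho> r by (intro mult_mono) (auto simp: less_imp_le)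
    then show "t m * norm z \<le> r"
      using \<rho> by simp
  qed
  moreover have "t \<longlonglongrightarrow> 1"
    unfolding t_def by real_asymp
  moreover have "\<forall>z\<in>L. norm z \<le> r"
    using norm_le_\<rho> r by force
  ultimately show ?thesis
    using t_gt_1 r(2) that by blast
qed

lemma exists_B_euler_series_eq_0:
  fixes L :: "complex set" and k :: "complex \<Rightarrow> nat"
  assumes fin: "finite L" and Lz: "\<forall>z\<in>L. 0 < norm z \<and> norm z < 1"
    and cnj_closed: "\<forall>z\<in>L. cnj z \<in> L \<and> k (cnj z) = k z"
    and prod_ge: "(\<Prod>z\<in>L. norm z ^ k z) \<ge> 1/2"
  shows "\<exists>h\<in>coeffs_B. \<forall>z\<in>L. \<forall>i<k z. euler_series h z i = 0"
proof -
  have "\<forall>z\<in>L. norm z < 1"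
    using Lz by blast
  then obtain t :: "nat \<Rightarrow> real" and r where t_gt_1: "\<forall>m. 1 < t m" and t_lim: "t \<longlonglongrightarrow> 1" and "r < 1"
    and norm_le_r: "\<forall>z\<in>L. norm z \<le> r" and t_norm_le: "\<forall>m. \<forall>z\<in>L. t m * norm z \<le> r"
    by (rule exists_outward_scaling[OF fin])
  have "\<exists>h\<in>coeffs_B. \<forall>z\<in>L. \<forall>i<k z. norm (euler_series h (of_real (t m) * z) i) \<le> 1 / (real m + 1)" for m
  proof (intro exists_B_small_euler_series_scaled[OF fin _ cnj_closed prod_ge] ballI)
    show "t m * norm z < 1" if "z \<in> L" for z
    proof -
      have "t m * norm z \<le> r"
        using t_norm_le that by blast
      then show ?thesis
        using \<open>r < 1\<close> by linarith
    qed
  qed (use Lz t_gt_1 in auto)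
  then obtain H where H_B: "\<And>m. H m \<in> coeffs_B"
    and H_small: "\<And>m z i. z \<in> L \<Longrightarrow> i < k z \<Longrightarrow>
      norm (euler_series (H m) (of_real (t m) * z) i) \<le> 1 / (real m + 1)"
    by metis
  obtain h where "h \<in> coeffs_B" and cluster: "\<And>n. infinite {m. \<forall>j<n. H m j = h j}"
    using exists_coeffs_B_cluster_point[of H, OF H_B] by blast
  moreover have "euler_series h z i = 0" if z: "z \<in> L" and i: "i < k z" for z i
  proof (rule euler_series_eq_0_of_cluster_point[where H = H and w = "\<lambda>m. of_real (t m) * z" and r = r])
    show "\<forall>n. \<bar>h n\<bar> \<le> 1" "\<forall>m n. \<bar>H m n\<bar> \<le> 1"
      using coeffs_B_abs_le_1 \<open>h \<in> coeffs_B\<close> H_B by blast+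
    show "infinite {m. \<forall>j<n. H m j = h j}" for n
      by (rule cluster)
    show "(\<lambda>m. of_real (t m) * z) \<longlonglongrightarrow> z"
      using tendsto_mult[OF tendsto_of_real[OF t_lim] tendsto_const[of z]] by simp
    show "\<forall>m. norm (of_real (t m) * z) \<le> r"
    proof
      fix m
      have "\<bar>t m\<bar> = t m"
        using t_gt_1[rule_format, of m] by simp
      then show "norm (of_real (t m) * z) \<le> r"
        using t_norm_le z by (simp add: norm_mult)
    qed
    show "norm z \<le> r" "r < 1"
      using norm_le_r z \<open>r < 1\<close> by auto
    have "\<forall>m. norm (euler_series (H m) (of_real (t m) * z) i) \<le> 1 / (real m + 1)"
      using H_small[OF z i] by blast
    moreover have "(\<lambda>m. 1 / (real m + 1)) \<longlonglongrightarrow> 0"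
      by real_asymp
    ultimately show "(\<lambda>m. euler_series (H m) (of_real (t m) * z) i) \<longlonglongrightarrow> 0"
      by (rule Lim_null_comparison[OF always_eventually])
  qed
  ultimately show ?thesis
    by blast
qed

theorem corollary2p4:
  fixes L :: "complex set" and k :: "complex \<Rightarrow> nat"
  assumes "finite L"
    and "L \<subseteq> ball 0 1"
    and "\<And>z. z \<in> L \<Longrightarrow> k z \<ge> 1"
    and "\<And>z. z \<in> L \<Longrightarrow> z \<notin> \<real> \<Longrightarrow> cnj z \<in> L \<and> k (cnj z) = k z"
    and "(\<Prod>z\<in>L. norm z ^ k z) \<ge> 1/2"
  shows "\<exists>a\<in>coeffs_B. \<forall>z\<in>L. zero_mult_ge (ps_fun a) z (k z)"
proof -
  have "0 \<notin> L"
  proof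
    assume "0 \<in> L"
    then have "(\<Prod>z\<in>L. norm z ^ k z) = 0"
      using assms(1) assms(3)[OF \<open>0 \<in> L\<close>] \<open>0 \<in> L\<close> by (intro prod_zero) (auto intro!: bexI[of _ 0])
    then show False
      using assms(5) by simp
  qed
  then have Lz: "\<forall>z\<in>L. 0 < norm z \<and> norm z < 1"
    using assms(2) by (auto simp: subset_iff)
  moreover have "\<forall>z\<in>L. cnj z \<in> L \<and> k (cnj z) = k z"
    using assms(4) by (metis Reals_cnj_iff)
  ultimately obtain a where "a \<in> coeffs_B" and zeros: "\<forall>z\<in>L. \<forall>i<k z. euler_series a z i = 0"
    using exists_B_euler_series_eq_0[OF assms(1) _ _ assms(5)] by blast
  have "zero_mult_ge (ps_fun a) z (k z)" if "z \<in> L" for z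
    using coeffs_B_abs_le_1[OF \<open>a \<in> coeffs_B\<close>] Lz zeros that by (intro zero_mult_ge_if_euler_series_eq_0) auto
  then show ?thesis
    using \<open>a \<in> coeffs_B\<close> by blast
qed

end
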